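(* Let $f:U\to\mathbb{H}$ be as in the lemma asserting that $C$ is real-valued (a smooth diffeomorphism of an open $U\subseteq\mathbb{R}^4$ onto an open set taking line segments to circle arcs or segments, with $\partial_\alpha A_\alpha=B_\alpha A_\alpha$, $A_\alpha=\partial_\alpha f$, and $C$ real-valued with $\partial_\alpha B_\beta=\tfrac12B_\alpha B_\beta+\tfrac13C(\overline{A_\alpha}A_\beta+\overline{A_\beta}A_\alpha+A_\alpha\overline{A_\beta})$). Suppose $0\in U$, $A_\alpha(0)=\alpha$ for all $\alpha\in\mathbb{R}^4=\mathbb{H}$, and $C(0)\neq0$. Then there exist a real-valued linear function $p$ on $\mathbb{R}^4$ and a quaternion $q$ such that $B_\alpha(0)=p(\alpha)+\alpha q$ for all $\alpha$. Consequently, if also $f(0)=0$, the 3-jet of $f$ at $0$ is $$x+\tfrac12\bigl(p(x)+xq\bigr)x+\tfrac16\Bigl(\tfrac32\bigl(p(x)+xq\bigr)^2+C(0)|x|^2\Bigr)x.$$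
   Context: $\mathbb{R}^4$ is identified with the quaternions $\mathbb{H}$; $\partial_\alpha$ is the directional derivative along a constant vector field $\alpha$; products are quaternion products, $\bar{\cdot}$ conjugation, $|\cdot|$ the norm. *)

theory Defs
  imports "HOL-Analysis.Analysis"
begin

text \<open>The quaternions are identified with real^4, coordinates (1,i,j,k) in positions 1..4.\<close>

type_synonym quat = "real ^ 4"

definition qmult :: "quat \<Rightarrow> quat \<Rightarrow> quat" (infixl "\<star>" 70) where
  "qmult x y = vector
     [x$1*y$1 - x$2*y$2 - x$3*y$3 - x$4*y$4,
      x$1*y$2 + x$2*y$1 + x$3*y$4 - x$4*y$3,
      x$1*y$3 - x$2*y$4 + x$3*y$1 + x$4*y$2,
      x$1*y$4 + x$2*y$3 - x$3*y$2 + x$4*y$1]"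

definition qcnj :: "quat \<Rightarrow> quat" where
  "qcnj x = vector [x$1, - x$2, - x$3, - x$4]"

definition qreal :: "real \<Rightarrow> quat" where
  "qreal r = vector [r, 0, 0, 0]"

definition dderiv :: "quat \<Rightarrow> (quat \<Rightarrow> 'b::real_normed_vector) \<Rightarrow> quat \<Rightarrow> 'b" where
  "dderiv \<alpha> g x = frechet_derivative g (at x) \<alpha>"

fun dpow :: "quat list \<Rightarrow> (quat \<Rightarrow> 'b::real_normed_vector) \<Rightarrow> quat \<Rightarrow> 'b" where
  "dpow [] g = g"
| "dpow (a # as) g = dderiv a (dpow as g)"

definition smooth_on :: "quat set \<Rightarrow> (quat \<Rightarrow> 'b::real_normed_vector) \<Rightarrow> bool" where
  "smooth_on U g \<longleftrightarrow> (\<forall>as. dpow as g differentiable_on U)"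

definition smooth_diffeo :: "quat set \<Rightarrow> (quat \<Rightarrow> quat) \<Rightarrow> bool" where
  "smooth_diffeo U f \<longleftrightarrow> open U \<and> open (f ` U) \<and> inj_on f U \<and> smooth_on U f
     \<and> smooth_on (f ` U) (inv_into U f)"

definition circle_arc :: "quat set \<Rightarrow> bool" where
  "circle_arc S \<longleftrightarrow> (\<exists>c u v r t0 t1. r > 0 \<and> norm u = 1 \<and> norm v = 1 \<and> inner u v = 0
      \<and> t0 \<le> t1 \<and> S = (\<lambda>t. c + r *\<^sub>R (cos t *\<^sub>R u + sin t *\<^sub>R v)) ` {t0..t1})"

definition segments_to_arcs :: "quat set \<Rightarrow> (quat \<Rightarrow> quat) \<Rightarrow> bool" where
  "segments_to_arcs U f \<longleftrightarrow> (\<forall>a b. closed_segment a b \<subseteq> U \<longrightarrow>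
      (circle_arc (f ` closed_segment a b) \<or> (\<exists>c d. f ` closed_segment a b = closed_segment c d)))"

end

(*
  Write b(a) = B_a(0) and u = 1. At the origin the structure equations express all derivatives of f
  up to order four through b, C(0) and the derivatives of C along lines. The latter exist because
  the third-order formula d_a d_b d_b f = (d_a B_b) A_b + B_b d_a d_b f, taken with a = b = u, can be
  solved for C near 0. The same formula at 0 shows that b is linear, and symmetry of second
  derivatives then gives d_g d_a f(0) = (b(g) a + b(a) g) / 2. For an imaginary direction e, the
  equality d_u d_e d_u d_u f(0) = d_e d_u d_u d_u f(0) of mixed fourth derivatives is linear in b(e),
  and its imaginary part says that b(e) - e q is real for q = Im b(u) - C'(0) / (2 C(0)), where C' is
  the derivative of C along u. Hence b(a) - a q is real for every a, which is the claimed form of b.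
  The 3-jet is the third-order Taylor polynomial of f, in which d_x d_x f(0) = b(x) x and
  d_x d_x d_x f(0) = (3/2 b(x)^2 + C(0) |x|^2) x.
*)

theory Submission
  imports Defs
begin

section \<open>Quaternion arithmetic\<close>

lemma vector4_nth [simp]:
  "(vector [a, b, c, d] :: 'a::zero^4) $ 1 = a" "(vector [a, b, c, d] :: 'a::zero^4) $ 2 = b"
  "(vector [a, b, c, d] :: 'a::zero^4) $ 3 = c" "(vector [a, b, c, d] :: 'a::zero^4) $ 4 = d"
  by (simp_all add: vector_def)

lemma qmult_nth [simp]:
  "(x \<star> y) $ 1 = x$1 * y$1 - x$2 * y$2 - x$3 * y$3 - x$4 * y$4"
  "(x \<star> y) $ 2 = x$1 * y$2 + x$2 * y$1 + x$3 * y$4 - x$4 * y$3"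
  "(x \<star> y) $ 3 = x$1 * y$3 - x$2 * y$4 + x$3 * y$1 + x$4 * y$2"
  "(x \<star> y) $ 4 = x$1 * y$4 + x$2 * y$3 - x$3 * y$2 + x$4 * y$1"
  by (simp_all add: qmult_def)

lemma qcnj_nth [simp]:
  "qcnj x $ 1 = x$1" "qcnj x $ 2 = - x$2" "qcnj x $ 3 = - x$3" "qcnj x $ 4 = - x$4"
  by (simp_all add: qcnj_def)

lemma qreal_nth [simp]:
  "qreal r $ 1 = r" "qreal r $ 2 = 0" "qreal r $ 3 = 0" "qreal r $ 4 = 0"
  by (simp_all add: qreal_def)

lemma quat_eq_iff: "(x::quat) = y \<longleftrightarrow> x$1 = y$1 \<and> x$2 = y$2 \<and> x$3 = y$3 \<and> x$4 = y$4"
  by (simp add: vec_eq_iff forall_4)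

lemma power2_norm_quat: "(norm (x::quat))\<^sup>2 = (x$1)\<^sup>2 + (x$2)\<^sup>2 + (x$3)\<^sup>2 + (x$4)\<^sup>2"
  by (simp add: norm_vec_def L2_set_def sum_4)

lemma norm_qmult: "norm (x \<star> y) = norm x * norm y"
proof -
  have "(norm (x \<star> y))\<^sup>2 = (norm x * norm y)\<^sup>2"
    unfolding power_mult_distrib power2_norm_quat qmult_nth by algebra
  then show ?thesis
    by simp
qed

global_interpretation qmult: bounded_bilinear qmult
proof
  show "\<exists>K. \<forall>x y. norm (x \<star> y) \<le> norm x * norm y * K"
    by (rule exI[of _ 1]) (simp add: norm_qmult)
qed (simp_all add: quat_eq_iff algebra_simps)

lemma qmult_assoc: "(x \<star> y) \<star> z = x \<star> (y \<star> z)"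
  by (simp add: quat_eq_iff algebra_simps)

lemma qmult_eq_0_iff: "x \<star> y = 0 \<longleftrightarrow> x = 0 \<or> y = 0"
  by (metis norm_qmult norm_eq_zero mult_eq_0_iff)

lemma qmult_right_cancel: "z \<noteq> 0 \<Longrightarrow> x \<star> z = y \<star> z \<Longrightarrow> x = y"
  by (metis qmult.diff_left qmult_eq_0_iff right_minus_eq)

lemma qreal_qmult [simp]: "qreal r \<star> x = r *\<^sub>R x" and qmult_qreal [simp]: "x \<star> qreal r = r *\<^sub>R x"
  by (simp_all add: quat_eq_iff)

definition cnj_prods :: "quat \<Rightarrow> quat \<Rightarrow> quat" where
  "cnj_prods x y = qcnj x \<star> y + qcnj y \<star> x + x \<star> qcnj y"

lemma norm_qcnj [simp]: "norm (qcnj x) = norm x"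
  by (simp add: norm_vec_def L2_set_def sum_4)

global_interpretation cnj_prods: bounded_bilinear cnj_prods
proof
  show "\<exists>K. \<forall>x y. norm (cnj_prods x y) \<le> norm x * norm y * K"
  proof (intro exI allI)
    fix x y
    have "norm (cnj_prods x y) \<le> norm (qcnj x \<star> y) + norm (qcnj y \<star> x) + norm (x \<star> qcnj y)"
      unfolding cnj_prods_def by (intro norm_triangle_le add_mono order_refl norm_triangle_ineq)
    then show "norm (cnj_prods x y) \<le> norm x * norm y * 3"
      by (simp add: norm_qmult)
  qed
qed (simp_all add: cnj_prods_def quat_eq_iff algebra_simps)

lemma cnj_prods_self: "cnj_prods x x = qreal (3 * (norm x)\<^sup>2)"
  using power2_norm_quat[of x] by (simp add: cnj_prods_def quat_eq_iff power2_eq_square algebra_simps)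

lemma scaleR_qreal: "r *\<^sub>R qreal s = qreal (r * s)"
  by (simp add: quat_eq_iff)

lemma linear_cancel_qmult_right:
  fixes h :: "quat \<Rightarrow> quat"
  assumes "w \<noteq> 0" and "linear (\<lambda>x. h x \<star> w)"
  shows "linear h"
proof (rule linearI)
  fix x y :: quat and r :: real
  show "h (x + y) = h x + h y"
    by (rule qmult_right_cancel[OF assms(1)])
      (use linear_add[OF assms(2), of x y] in \<open>simp add: qmult.add_left\<close>)
  show "h (r *\<^sub>R x) = r *\<^sub>R h x"
    by (rule qmult_right_cancel[OF assms(1)])
      (use linear_scale[OF assms(2), of r x] in \<open>simp add: qmult.scaleR_left\<close>)
qed

lemma differentiable_qmult:
  "f differentiable (at x within S) \<Longrightarrow> g differentiable (at x within S) \<Longrightarrow>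
    (\<lambda>x. f x \<star> g x) differentiable (at x within S)"
  unfolding differentiable_def by (blast intro: qmult.FDERIV)

section \<open>Iterated directional derivatives\<close>

lemma dpow_append: "dpow (bs @ as) g = dpow bs (dpow as g)"
  by (induction bs) auto

lemma smooth_on_dpow: "smooth_on U g \<Longrightarrow> smooth_on U (dpow as g)"
  unfolding smooth_on_def by (simp add: dpow_append[symmetric])

lemma dpow_has_derivative:
  assumes "smooth_on U g" "open U" "x \<in> U"
  shows "(dpow as g has_derivative (\<lambda>v. dpow (v # as) g x)) (at x)"
proof -
  have "dpow as g differentiable (at x)"
    using assms unfolding smooth_on_def by (meson differentiable_on_eq_differentiable_at)
  then show ?thesis
    unfolding dpow.simps dderiv_def by (rule frechet_derivative_works[THEN iffD1])
qed

lemma linear_dpow_Cons: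
  "smooth_on U g \<Longrightarrow> open U \<Longrightarrow> x \<in> U \<Longrightarrow> linear (\<lambda>v. dpow (v # as) g x)"
  using dpow_has_derivative has_derivative_linear by blast

lemma isCont_dpow: "smooth_on U g \<Longrightarrow> open U \<Longrightarrow> x \<in> U \<Longrightarrow> isCont (dpow as g) x"
  using dpow_has_derivative has_derivative_continuous by blast

lemma dpow_has_vector_derivative_line:
  assumes "smooth_on U g" "open U" "x + t *\<^sub>R v \<in> U"
  shows "((\<lambda>s. dpow as g (x + s *\<^sub>R v)) has_vector_derivative dpow (v # as) g (x + t *\<^sub>R v)) (at t)"
proof -
  have line: "((\<lambda>s. x + s *\<^sub>R v) has_derivative (\<lambda>s. s *\<^sub>R v)) (at t)"
    by (auto intro!: derivative_eq_intros)
  have "((\<lambda>s. dpow as g (x + s *\<^sub>R v)) has_derivative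
      (\<lambda>s. dpow ((s *\<^sub>R v) # as) g (x + t *\<^sub>R v))) (at t)"
    using diff_chain_at[OF line dpow_has_derivative[OF assms]] by (simp add: o_def)
  then show ?thesis
    using linear_scale[OF linear_dpow_Cons[OF assms]] by (simp add: has_vector_derivative_def)
qed

lemma norm_diff_le_of_vector_derivative_bound:
  fixes h :: "real \<Rightarrow> 'a::real_normed_vector"
  assumes "a \<le> b"
    and "\<And>t. t \<in> {a..b} \<Longrightarrow> (h has_vector_derivative h' t) (at t)"
    and "\<And>t. t \<in> {a..b} \<Longrightarrow> norm (h' t) \<le> M"
  shows "norm (h b - h a) \<le> M * (b - a)"
proof (cases "a = b")
  case False
  then have "a < b"
    using assms(1) by simp
  moreover have "continuous_on {a..b} h"
    using assms(2) has_vector_derivative_continuous continuous_at_imp_continuous_on by blast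
  ultimately have "norm (h b - h a) \<le> M * b - M * a"
    by (rule differentiable_bound_general[where \<phi>="\<lambda>t. M * t" and \<phi>'="\<lambda>_. M" and f'=h'])
       (use assms in \<open>auto intro!: continuous_intros derivative_eq_intros\<close>)
  then show ?thesis
    by (simp add: algebra_simps)
qed simp

lemma norm_diff_le_of_vector_derivative_bound_unit:
  fixes h :: "real \<Rightarrow> 'a::real_normed_vector"
  assumes "\<And>t. t \<in> {0..1} \<Longrightarrow> (h has_vector_derivative h' t) (at t)"
    and "\<And>t. t \<in> {0..1} \<Longrightarrow> norm (h' t) \<le> M"
    and "t \<in> {0..1}"
  shows "norm (h t - h 0) \<le> M"
proof -
  have "norm (h t - h 0) \<le> M * (t - 0)"
    by (rule norm_diff_le_of_vector_derivative_bound[where h'=h']) (use assms in auto)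
  also have "\<dots> \<le> M"
    using assms(3) order_trans[OF norm_ge_zero assms(2)[of 0]] by (simp add: mult_left_le)
  finally show ?thesis .
qed

lemma eventually_nhds_dpow:
  fixes g :: "quat \<Rightarrow> 'b::real_normed_vector"
  assumes "smooth_on U g" "open U" "y \<in> U" "e > 0"
  shows "\<forall>\<^sub>F z in nhds y. z \<in> U \<and> dist (dpow cs g z) (dpow cs g y) < e"
proof -
  have "\<forall>\<^sub>F z in at y. dist (dpow cs g z) (dpow cs g y) < e"
    using isCont_dpow[OF assms(1-3), unfolded isCont_def] assms(4) by (rule tendstoD)
  moreover have "\<forall>\<^sub>F z in at y. z \<in> U"
    using eventually_nhds_in_open[OF assms(2,3)] by (simp add: eventually_nhds_conv_at)
  ultimately show ?thesis
    using assms(3,4) by (simp add: eventually_nhds_conv_at eventually_conj_iff)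
qed

lemma eventually_nhds_square:
  fixes y a b :: "'a::real_normed_vector"
  assumes "\<forall>\<^sub>F z in nhds y. P z"
  obtains s where "s > 0" and "\<And>r t. r \<in> {0..s} \<Longrightarrow> t \<in> {0..s} \<Longrightarrow> P (y + r *\<^sub>R a + t *\<^sub>R b)"
proof -
  obtain d where "d > 0" and d: "\<And>z. dist z y < d \<Longrightarrow> P z"
    using assms unfolding eventually_nhds_metric by blast
  define s where "s = d / (2 * (norm a + norm b + 1))"
  have "norm a + norm b + 1 > 0"
    using norm_ge_zero[of a] norm_ge_zero[of b] by linarith
  then have "s > 0"
    using \<open>d > 0\<close> by (simp add: s_def)
  show ?thesis
  proof (rule that)
    show "s > 0"
      by fact
    fix r t
    assume "r \<in> {0..s}" "t \<in> {0..s}"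
    then have "dist (y + r *\<^sub>R a + t *\<^sub>R b) y \<le> r * norm a + t * norm b"
      using norm_triangle_ineq[of "r *\<^sub>R a" "t *\<^sub>R b"] by (simp add: dist_norm)
    also have "\<dots> \<le> s * (norm a + norm b)"
      using \<open>r \<in> {0..s}\<close> \<open>t \<in> {0..s}\<close> by (simp add: distrib_left add_mono mult_right_mono)
    also have "\<dots> \<le> s * (norm a + norm b + 1)"
      using \<open>s > 0\<close> by simp
    also have "\<dots> = d / 2"
      using \<open>norm a + norm b + 1 > 0\<close> by (simp add: s_def field_simps)
    also have "\<dots> < d"
      using \<open>d > 0\<close> by simp
    finally show "P (y + r *\<^sub>R a + t *\<^sub>R b)"
      by (rule d)
  qed
qed

lemma second_difference_estimate:
  fixes g :: "quat \<Rightarrow> 'b::real_normed_vector"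
  assumes g: "smooth_on U g" "open U" and "s \<ge> 0"
    and square: "\<And>r t. r \<in> {0..s} \<Longrightarrow> t \<in> {0..s} \<Longrightarrow> y + r *\<^sub>R a + t *\<^sub>R b \<in> U"
    and close: "\<And>r t. r \<in> {0..s} \<Longrightarrow> t \<in> {0..s} \<Longrightarrow>
      norm (dpow [a, b] g (y + r *\<^sub>R a + t *\<^sub>R b) - M) \<le> e"
  shows "norm (g (y + s *\<^sub>R a + s *\<^sub>R b) - g (y + s *\<^sub>R a) - g (y + s *\<^sub>R b) + g y
      - (s * s) *\<^sub>R M) \<le> e * (s * s)"
proof -
  define \<phi> where "\<phi> t = g (y + s *\<^sub>R a + t *\<^sub>R b) - g (y + t *\<^sub>R b) - (t * s) *\<^sub>R M" for t
  define \<phi>' where "\<phi>' t = dpow [b] g (y + s *\<^sub>R a + t *\<^sub>R b) - dpow [b] g (y + t *\<^sub>R b) - s *\<^sub>R M"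
    for t
  have "(\<phi> has_vector_derivative \<phi>' t) (at t)" if "t \<in> {0..s}" for t
    unfolding \<phi>_def \<phi>'_def
    using dpow_has_vector_derivative_line[OF g, of "y + s *\<^sub>R a" t b "[]"]
      dpow_has_vector_derivative_line[OF g, of y t b "[]"] square[of s t] square[of 0 t]
      that \<open>s \<ge> 0\<close>
    by (auto intro!: derivative_eq_intros)
  moreover have "norm (\<phi>' t) \<le> e * s" if t: "t \<in> {0..s}" for t
  proof -
    define \<psi> where "\<psi> r = dpow [b] g (y + t *\<^sub>R b + r *\<^sub>R a) - r *\<^sub>R M" for r
    have "norm (\<psi> s - \<psi> 0) \<le> e * (s - 0)"
    proof (rule norm_diff_le_of_vector_derivative_bound[OF \<open>s \<ge> 0\<close>])
      fix r assume r: "r \<in> {0..s}"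
      have "y + t *\<^sub>R b + r *\<^sub>R a = y + r *\<^sub>R a + t *\<^sub>R b"
        by (simp add: algebra_simps)
      then have in_U: "y + t *\<^sub>R b + r *\<^sub>R a \<in> U"
        and bound: "norm (dpow [a, b] g (y + t *\<^sub>R b + r *\<^sub>R a) - M) \<le> e"
        using square[OF r t] close[OF r t] by (simp_all add: algebra_simps)
      show "(\<psi> has_vector_derivative dpow [a, b] g (y + t *\<^sub>R b + r *\<^sub>R a) - M) (at r)"
        unfolding \<psi>_def using dpow_has_vector_derivative_line[OF g in_U, of "[b]"]
        by (auto intro!: derivative_eq_intros)
      show "norm (dpow [a, b] g (y + t *\<^sub>R b + r *\<^sub>R a) - M) \<le> e"
        by (rule bound)
    qed
    moreover have "\<psi> s - \<psi> 0 = \<phi>' t"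
      unfolding \<psi>_def \<phi>'_def by (simp add: algebra_simps)
    ultimately show ?thesis
      by simp
  qed
  ultimately have "norm (\<phi> s - \<phi> 0) \<le> (e * s) * (s - 0)"
    by (intro norm_diff_le_of_vector_derivative_bound[OF \<open>s \<ge> 0\<close>])
  then show ?thesis
    unfolding \<phi>_def by (simp add: algebra_simps)
qed

lemma norm_diff_le_of_common_approx:
  fixes D M M' :: "'a::real_normed_vector"
  assumes "c > 0" and "norm (D - c *\<^sub>R M) \<le> e * c" and "norm (D - c *\<^sub>R M') \<le> e * c"
  shows "norm (M - M') \<le> 2 * e"
proof -
  have "c * norm (M - M') = norm ((D - c *\<^sub>R M') - (D - c *\<^sub>R M))"
    using \<open>c > 0\<close> by (simp add: scaleR_diff_right[symmetric])
  also have "\<dots> \<le> e * c + e * c"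
    using norm_triangle_ineq4[of "D - c *\<^sub>R M'" "D - c *\<^sub>R M"] assms(2,3) by linarith
  finally show ?thesis
    using \<open>c > 0\<close> by (simp add: algebra_simps)
qed

text \<open>Both mixed derivatives are the limit of the same second difference quotient.\<close>
lemma dpow_swap:
  fixes g :: "quat \<Rightarrow> 'b::real_normed_vector"
  assumes g: "smooth_on U g" "open U" and "y \<in> U"
  shows "dpow [a, b] g y = dpow [b, a] g y"
proof -
  define M where "M = dpow [a, b] g y"
  define M' where "M' = dpow [b, a] g y"
  have bound: "norm (M - M') \<le> 2 * e" if "e > 0" for e
  proof -
    have "\<forall>\<^sub>F z in nhds y. z \<in> U \<and> norm (dpow [a, b] g z - M) \<le> e \<and> norm (dpow [b, a] g z - M') \<le> e"
      using eventually_nhds_dpow[OF g \<open>y \<in> U\<close> \<open>e > 0\<close>, of "[a, b]"]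
        eventually_nhds_dpow[OF g \<open>y \<in> U\<close> \<open>e > 0\<close>, of "[b, a]"]
      unfolding M_def M'_def by eventually_elim (auto simp: dist_norm intro: less_imp_le)
    then obtain s where "s > 0" and square: "\<And>r t. r \<in> {0..s} \<Longrightarrow> t \<in> {0..s} \<Longrightarrow>
        y + r *\<^sub>R a + t *\<^sub>R b \<in> U \<and> norm (dpow [a, b] g (y + r *\<^sub>R a + t *\<^sub>R b) - M) \<le> e
        \<and> norm (dpow [b, a] g (y + r *\<^sub>R a + t *\<^sub>R b) - M') \<le> e"
      by (rule eventually_nhds_square[where a = a and b = b]) blast
    define D where "D = g (y + s *\<^sub>R a + s *\<^sub>R b) - g (y + s *\<^sub>R a) - g (y + s *\<^sub>R b) + g y"
    show ?thesis
    proof (rule norm_diff_le_of_common_approx[of "s * s" D])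
      show "s * s > 0"
        using \<open>s > 0\<close> by simp
      show "norm (D - (s * s) *\<^sub>R M) \<le> e * (s * s)"
        unfolding D_def using \<open>s > 0\<close> square by (intro second_difference_estimate[OF g]) auto
      have "norm (g (y + s *\<^sub>R b + s *\<^sub>R a) - g (y + s *\<^sub>R b) - g (y + s *\<^sub>R a) + g y
          - (s * s) *\<^sub>R M') \<le> e * (s * s)"
      proof (rule second_difference_estimate[OF g])
        fix r t
        assume "r \<in> {0..s}" "t \<in> {0..s}"
        moreover have "y + r *\<^sub>R b + t *\<^sub>R a = y + t *\<^sub>R a + r *\<^sub>R b"
          by (simp add: algebra_simps)
        ultimately show "y + r *\<^sub>R b + t *\<^sub>R a \<in> U"
          and "norm (dpow [b, a] g (y + r *\<^sub>R b + t *\<^sub>R a) - M') \<le> e"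
          using square[of t r] by metis+
      qed (use \<open>s > 0\<close> in auto)
      then show "norm (D - (s * s) *\<^sub>R M') \<le> e * (s * s)"
        unfolding D_def by (simp add: algebra_simps)
    qed
  qed
  have "norm (M - M') \<le> 0"
  proof (rule field_le_epsilon)
    fix e :: real
    assume "e > 0"
    then show "norm (M - M') \<le> 0 + e"
      using bound[of "e / 2"] by simp
  qed
  then show ?thesis
    by (simp add: M_def M'_def)
qed

section \<open>Third-order Taylor expansion\<close>

lemma taylor3_remainder_bound:
  fixes h h' h'' h''' :: "real \<Rightarrow> 'a::real_normed_vector"
  assumes h: "\<And>t. t \<in> {0..1} \<Longrightarrow> (h has_vector_derivative h' t) (at t)"
    and h': "\<And>t. t \<in> {0..1} \<Longrightarrow> (h' has_vector_derivative h'' t) (at t)"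
    and h'': "\<And>t. t \<in> {0..1} \<Longrightarrow> (h'' has_vector_derivative h''' t) (at t)"
    and h''': "\<And>t. t \<in> {0..1} \<Longrightarrow> norm (h''' t - h''' 0) \<le> M"
  shows "norm (h 1 - (h 0 + h' 0 + (1/2) *\<^sub>R h'' 0 + (1/6) *\<^sub>R h''' 0)) \<le> M"
proof -
  define p2 where "p2 t = h'' t - t *\<^sub>R h''' 0" for t
  define p1 where "p1 t = h' t - t *\<^sub>R h'' 0 - (t\<^sup>2 / 2) *\<^sub>R h''' 0" for t
  define p0 where "p0 t = h t - t *\<^sub>R h' 0 - (t\<^sup>2 / 2) *\<^sub>R h'' 0 - (t ^ 3 / 6) *\<^sub>R h''' 0" for t
  have "(p2 has_vector_derivative h''' t - h''' 0) (at t)" if "t \<in> {0..1}" for t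
    unfolding p2_def using h''[OF that] by (auto intro!: derivative_eq_intros)
  then have p2: "norm (p2 t - p2 0) \<le> M" if "t \<in> {0..1}" for t
    using h''' that by (rule norm_diff_le_of_vector_derivative_bound_unit)
  have "(p1 has_vector_derivative p2 t - p2 0) (at t)" if "t \<in> {0..1}" for t
    unfolding p1_def p2_def using h'[OF that]
    by (auto intro!: derivative_eq_intros simp: algebra_simps)
  then have p1: "norm (p1 t - p1 0) \<le> M" if "t \<in> {0..1}" for t
    using p2 that by (rule norm_diff_le_of_vector_derivative_bound_unit)
  have p0: "(p0 has_vector_derivative p1 t - p1 0) (at t)" if "t \<in> {0..1}" for t
    unfolding p0_def p1_def using h[OF that]
    by (auto intro!: derivative_eq_intros simp: algebra_simps power2_eq_square)
  have "norm (p0 1 - p0 0) \<le> M"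
    by (rule norm_diff_le_of_vector_derivative_bound_unit[OF p0 p1]) simp_all
  then show ?thesis
    by (simp add: p0_def algebra_simps)
qed

lemma dpow_sum:
  fixes h :: "quat \<Rightarrow> 'b::real_normed_vector"
  assumes "open U" and "smooth_on U h" and "\<And>i. i \<in> I \<Longrightarrow> smooth_on U (h' i)"
    and h: "\<And>z. z \<in> U \<Longrightarrow> h z = (\<Sum>i\<in>I. w i *\<^sub>R h' i z)"
  shows "z \<in> U \<Longrightarrow> dpow cs h z = (\<Sum>i\<in>I. w i *\<^sub>R dpow cs (h' i) z)"
proof (induction cs arbitrary: z)
  case Nil
  then show ?case
    using h by simp
next
  case (Cons c cs)
  have "((\<lambda>z. \<Sum>i\<in>I. w i *\<^sub>R dpow cs (h' i) z) has_derivative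
      (\<lambda>v. \<Sum>i\<in>I. w i *\<^sub>R dpow (v # cs) (h' i) z)) (at z)"
    using assms(1,3) Cons.prems
    by (intro has_derivative_sum has_derivative_scaleR_right dpow_has_derivative)
  then have "(dpow cs h has_derivative (\<lambda>v. \<Sum>i\<in>I. w i *\<^sub>R dpow (v # cs) (h' i) z)) (at z)"
    by (rule has_derivative_transform_within_open[OF _ \<open>open U\<close> Cons.prems]) (simp add: Cons.IH)
  with dpow_has_derivative[OF assms(2,1) Cons.prems]
  have "(\<lambda>v. dpow (v # cs) h z) = (\<lambda>v. \<Sum>i\<in>I. w i *\<^sub>R dpow (v # cs) (h' i) z)"
    by (rule has_derivative_unique)
  then show ?case
    by (metis dpow.simps(2))
qed

lemma linear_quat_basis_expansion: "linear L \<Longrightarrow> L (x::quat) = (\<Sum>i\<in>UNIV. x $ i *\<^sub>R L (axis i 1))"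
  by (subst basis_expansion[of x, symmetric])
    (simp add: linear_sum linear_scale scalar_mult_eq_scaleR)

lemma dpow3_expansion:
  fixes g :: "quat \<Rightarrow> 'b::real_normed_vector"
  assumes g: "smooth_on U g" "open U" and "y \<in> U"
  shows "dpow [x, x, x] g y = (\<Sum>i\<in>UNIV. \<Sum>j\<in>UNIV. \<Sum>k\<in>UNIV.
      (x$i * x$j * x$k) *\<^sub>R dpow [axis i 1, axis j 1, axis k 1] g y)"
proof -
  have expand: "dpow (v # cs) g z = (\<Sum>i\<in>UNIV. v$i *\<^sub>R dpow (axis i 1 # cs) g z)"
    if "z \<in> U" for v cs z
    using linear_quat_basis_expansion[OF linear_dpow_Cons[OF g that]] .
  have "dpow [axis i 1] (dpow [x, x] g) y
      = (\<Sum>j\<in>UNIV. x$j *\<^sub>R dpow [axis i 1] (dpow [axis j 1, x] g) y)" for i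
    using \<open>open U\<close> smooth_on_dpow[OF g(1)] smooth_on_dpow[OF g(1)] expand \<open>y \<in> U\<close> by (rule dpow_sum)
  then have second: "dpow [axis i 1, x, x] g y
      = (\<Sum>j\<in>UNIV. x$j *\<^sub>R dpow [axis i 1, axis j 1, x] g y)" for i
    by (simp only: dpow.simps)
  have "dpow [axis i 1, axis j 1] (dpow [x] g) y
      = (\<Sum>k\<in>UNIV. x$k *\<^sub>R dpow [axis i 1, axis j 1] (dpow [axis k 1] g) y)" for i j
    using \<open>open U\<close> smooth_on_dpow[OF g(1)] smooth_on_dpow[OF g(1)] expand \<open>y \<in> U\<close> by (rule dpow_sum)
  then have third: "dpow [axis i 1, axis j 1, x] g y
      = (\<Sum>k\<in>UNIV. x$k *\<^sub>R dpow [axis i 1, axis j 1, axis k 1] g y)" for i j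
    by (simp only: dpow.simps)
  show ?thesis
    unfolding expand[OF \<open>y \<in> U\<close>, of x "[x, x]"] second third
    by (simp add: scaleR_sum_right mult.assoc)
qed

lemma norm_dpow3_diag_diff_le:
  fixes g :: "quat \<Rightarrow> 'b::real_normed_vector"
  assumes g: "smooth_on U g" "open U" and "y \<in> U" and "z \<in> U"
    and close: "\<And>i j k. norm (dpow [axis i 1, axis j 1, axis k 1] g z
      - dpow [axis i 1, axis j 1, axis k 1] g y) \<le> c"
  shows "norm (dpow [x, x, x] g z - dpow [x, x, x] g y) \<le> 64 * c * norm x ^ 3"
proof -
  have "dpow [x, x, x] g z - dpow [x, x, x] g y = (\<Sum>i\<in>UNIV. \<Sum>j\<in>UNIV. \<Sum>k\<in>UNIV. (x$i * x$j * x$k)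
      *\<^sub>R (dpow [axis i 1, axis j 1, axis k 1] g z - dpow [axis i 1, axis j 1, axis k 1] g y))"
    unfolding dpow3_expansion[OF g \<open>y \<in> U\<close>] dpow3_expansion[OF g \<open>z \<in> U\<close>]
    by (simp add: sum_subtractf scaleR_diff_right)
  also have "norm \<dots> \<le> (\<Sum>i\<in>(UNIV::4 set). \<Sum>j\<in>(UNIV::4 set). \<Sum>k\<in>(UNIV::4 set). norm x ^ 3 * c)"
  proof (intro order_trans[OF norm_sum sum_mono])
    fix i j k :: 4
    have "\<bar>x$i * x$j * x$k\<bar> \<le> norm x ^ 3"
      unfolding abs_mult power3_eq_cube by (intro mult_mono component_le_norm_cart) auto
    then show "norm ((x$i * x$j * x$k) *\<^sub>R (dpow [axis i 1, axis j 1, axis k 1] g z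
        - dpow [axis i 1, axis j 1, axis k 1] g y)) \<le> norm x ^ 3 * c"
      unfolding norm_scaleR using close by (rule mult_mono) auto
  qed
  also have "\<dots> = 64 * c * norm x ^ 3"
    by simp
  finally show ?thesis .
qed

lemma eventually_dpow3_diag_close:
  fixes g :: "quat \<Rightarrow> 'b::real_normed_vector"
  assumes g: "smooth_on U g" "open U" and "y \<in> U" and "e > 0"
  shows "\<forall>\<^sub>F z in nhds y. z \<in> U \<and>
    (\<forall>x. norm (dpow [x, x, x] g z - dpow [x, x, x] g y) \<le> e * norm x ^ 3)"
proof -
  define D where "D ijk = dpow [axis (fst ijk) 1, axis (fst (snd ijk)) 1, axis (snd (snd ijk)) 1] g"
    for ijk :: "4 \<times> 4 \<times> 4"
  have "\<forall>\<^sub>F z in nhds y. z \<in> U \<and> dist (D ijk z) (D ijk y) < e / 64" for ijk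
    unfolding D_def using g \<open>y \<in> U\<close> \<open>e > 0\<close> by (intro eventually_nhds_dpow) simp_all
  then have "\<forall>\<^sub>F z in nhds y. \<forall>ijk. z \<in> U \<and> dist (D ijk z) (D ijk y) < e / 64"
    by (rule eventually_all_finite)
  then show ?thesis
  proof (rule eventually_mono)
    fix z
    assume z: "\<forall>ijk. z \<in> U \<and> dist (D ijk z) (D ijk y) < e / 64"
    then have "z \<in> U"
      by blast
    moreover have "norm (dpow [x, x, x] g z - dpow [x, x, x] g y) \<le> 64 * (e / 64) * norm x ^ 3"
      for x
      using z by (intro norm_dpow3_diag_diff_le[OF g \<open>y \<in> U\<close> \<open>z \<in> U\<close>])
        (auto simp: D_def dist_norm less_imp_le)
    ultimately show "z \<in> U \<and> (\<forall>x. norm (dpow [x, x, x] g z - dpow [x, x, x] g y) \<le> e * norm x ^ 3)"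
      by simp
  qed
qed

lemma eventually_nhds_segment:
  fixes y :: "'a::real_normed_vector"
  assumes "\<forall>\<^sub>F z in nhds y. P z"
  shows "\<forall>\<^sub>F x in nhds 0. \<forall>t\<in>{0..1}. P (y + t *\<^sub>R x)"
proof -
  obtain d where "d > 0" and d: "\<And>z. dist z y < d \<Longrightarrow> P z"
    using assms unfolding eventually_nhds_metric by blast
  show ?thesis
    unfolding eventually_nhds_metric
  proof (intro exI[of _ d] conjI allI impI ballI)
    fix x :: 'a and t :: real
    assume "dist x 0 < d" and "t \<in> {0..1}"
    then have "norm (t *\<^sub>R x) < d"
      using mult_left_le_one_le[of "norm x" t] by simp
    then show "P (y + t *\<^sub>R x)"
      by (intro d) (simp add: dist_norm)
  qed (rule \<open>d > 0\<close>)
qed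

lemma dpow_taylor3_remainder_bound:
  fixes g :: "quat \<Rightarrow> 'b::real_normed_vector"
  assumes g: "smooth_on U g" "open U"
    and segment: "\<And>t. t \<in> {0..1} \<Longrightarrow> y + t *\<^sub>R x \<in> U \<and>
      norm (dpow [x, x, x] g (y + t *\<^sub>R x) - dpow [x, x, x] g y) \<le> M"
  shows "norm (g (y + x) - (g y + dpow [x] g y + (1/2) *\<^sub>R dpow [x, x] g y
    + (1/6) *\<^sub>R dpow [x, x, x] g y)) \<le> M"
proof -
  have "norm (g (y + 1 *\<^sub>R x) - (g (y + 0 *\<^sub>R x) + dpow [x] g (y + 0 *\<^sub>R x)
      + (1/2) *\<^sub>R dpow [x, x] g (y + 0 *\<^sub>R x) + (1/6) *\<^sub>R dpow [x, x, x] g (y + 0 *\<^sub>R x))) \<le> M"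
  proof (rule taylor3_remainder_bound[where h = "\<lambda>t. g (y + t *\<^sub>R x)"
        and h' = "\<lambda>t. dpow [x] g (y + t *\<^sub>R x)"
        and h'' = "\<lambda>t. dpow [x, x] g (y + t *\<^sub>R x)" and h''' = "\<lambda>t. dpow [x, x, x] g (y + t *\<^sub>R x)"])
    fix t :: real
    assume "t \<in> {0..1}"
    then have "y + t *\<^sub>R x \<in> U"
      using segment by blast
    then show "((\<lambda>t. g (y + t *\<^sub>R x)) has_vector_derivative dpow [x] g (y + t *\<^sub>R x)) (at t)"
      and "((\<lambda>t. dpow [x] g (y + t *\<^sub>R x)) has_vector_derivative dpow [x, x] g (y + t *\<^sub>R x)) (at t)"
      and "((\<lambda>t. dpow [x, x] g (y + t *\<^sub>R x)) has_vector_derivative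
        dpow [x, x, x] g (y + t *\<^sub>R x)) (at t)"
      using dpow_has_vector_derivative_line[OF g, of y t x "[]"]
        dpow_has_vector_derivative_line[OF g, of y t x "[x]"]
        dpow_has_vector_derivative_line[OF g, of y t x "[x, x]"] by simp_all
    show "norm (dpow [x, x, x] g (y + t *\<^sub>R x) - dpow [x, x, x] g (y + 0 *\<^sub>R x)) \<le> M"
      using segment[OF \<open>t \<in> {0..1}\<close>] by (simp only: scaleR_zero_left add_0_right)
  qed
  then show ?thesis
    by simp
qed

lemma dpow_taylor3:
  fixes g :: "quat \<Rightarrow> 'b::real_normed_vector"
  assumes g: "smooth_on U g" "open U" and "y \<in> U"
  shows "((\<lambda>x. (g (y + x) - (g y + dpow [x] g y + (1/2) *\<^sub>R dpow [x, x] g y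
      + (1/6) *\<^sub>R dpow [x, x, x] g y)) /\<^sub>R norm x ^ 3) \<longlongrightarrow> 0) (at 0)"
    (is "((\<lambda>x. ?rem x /\<^sub>R norm x ^ 3) \<longlongrightarrow> 0) (at 0)")
proof (rule tendstoI)
  fix e :: real
  assume "e > 0"
  then have "e / 2 > 0" and "e / 2 < e"
    by simp_all
  have "\<forall>\<^sub>F x in nhds 0. \<forall>t\<in>{0..1}. y + t *\<^sub>R x \<in> U \<and>
      (\<forall>v. norm (dpow [v, v, v] g (y + t *\<^sub>R x) - dpow [v, v, v] g y) \<le> e / 2 * norm v ^ 3)"
    by (rule eventually_nhds_segment[OF eventually_dpow3_diag_close[OF g \<open>y \<in> U\<close> \<open>e / 2 > 0\<close>]])
  then have "\<forall>\<^sub>F x in at 0. x \<noteq> 0 \<and> norm (?rem x) \<le> e / 2 * norm x ^ 3"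
    unfolding eventually_at_filter
    by eventually_elim (intro impI conjI dpow_taylor3_remainder_bound[OF g]; blast)
  then show "\<forall>\<^sub>F x in at 0. dist (?rem x /\<^sub>R norm x ^ 3) 0 < e"
  proof eventually_elim
    case (elim x)
    then have "norm x ^ 3 > 0" and rem: "norm (?rem x) \<le> e / 2 * norm x ^ 3"
      by simp_all
    then have "norm (?rem x) / norm x ^ 3 \<le> e / 2"
      by (simp only: pos_divide_le_eq)
    moreover have dist_div: "dist (v /\<^sub>R c) 0 = norm v / c" if "c > 0" for v :: 'b and c :: real
      using that by (simp add: divide_inverse mult.commute)
    ultimately show ?case
      using dist_div[OF \<open>norm x ^ 3 > 0\<close>, of "?rem x"] \<open>e / 2 < e\<close> by linarith
  qed
qed

section \<open>The structure equations at the origin\<close>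

lemma has_real_derivative_factor:
  fixes h d r :: "real \<Rightarrow> real"
  assumes "(d has_real_derivative d') (at x)" and "(r has_real_derivative r') (at x)" and "d x \<noteq> 0"
    and "\<forall>\<^sub>F t in nhds x. h t * d t = r t"
  shows "(h has_real_derivative (r' * d x - r x * d') / (d x * d x)) (at x)"
proof -
  have "\<forall>\<^sub>F t in nhds x. d t \<noteq> 0"
    using DERIV_isCont[OF assms(1)] \<open>d x \<noteq> 0\<close>
    by (simp add: isCont_def eventually_nhds_conv_at tendsto_imp_eventually_ne)
  with assms(4) have "\<forall>\<^sub>F t in nhds x. r t / d t = h t"
    by eventually_elim (simp add: field_simps)
  then show ?thesis
    using DERIV_divide[OF assms(2,1,3)] by (rule DERIV_cong_ev[OF refl _ refl, THEN iffD1])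
qed

lemma differentiable_vec_nth: "g differentiable F \<Longrightarrow> (\<lambda>x. g x $ i) differentiable F"
  unfolding differentiable_def
  by (blast intro: bounded_linear.has_derivative[OF bounded_linear_vec_nth])

lemma differentiable_factor:
  fixes h d r :: "real \<Rightarrow> real"
  assumes "d differentiable (at x)" and "r differentiable (at x)" and "d x \<noteq> 0"
    and "\<forall>\<^sub>F t in nhds x. h t * d t = r t"
  shows "h differentiable (at x)"
proof -
  have "(h has_real_derivative (deriv r x * d x - r x * deriv d x) / (d x * d x)) (at x)"
    using assms(1,2) by (rule_tac has_real_derivative_factor[OF _ _ assms(3,4)])
      (simp_all add: DERIV_deriv_iff_real_differentiable)
  then show ?thesis
    by (rule differentiableI[OF has_field_derivative_imp_has_derivative])
qed

locale structure_equations =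
  fixes U :: "quat set" and f :: "quat \<Rightarrow> quat"
    and B :: "quat \<Rightarrow> quat \<Rightarrow> quat" and C :: "quat \<Rightarrow> real"
  assumes open_domain: "open U" and smooth: "smooth_on U f"
    and AB: "\<And>\<alpha> x. x \<in> U \<Longrightarrow>
       ((\<lambda>t. dderiv \<alpha> f (x + t *\<^sub>R \<alpha>)) has_vector_derivative (B \<alpha> x \<star> dderiv \<alpha> f x)) (at 0)"
    and BC: "\<And>\<alpha> \<beta> x. x \<in> U \<Longrightarrow>
       ((\<lambda>t. B \<beta> (x + t *\<^sub>R \<alpha>)) has_vector_derivative
          ((1/2) *\<^sub>R (B \<alpha> x \<star> B \<beta> x)
           + (C x / 3) *\<^sub>R (qcnj (dderiv \<alpha> f x) \<star> dderiv \<beta> f x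
                            + qcnj (dderiv \<beta> f x) \<star> dderiv \<alpha> f x
                            + dderiv \<alpha> f x \<star> qcnj (dderiv \<beta> f x)))) (at 0)"
    and zero_in_domain: "0 \<in> U"
    and A0: "\<And>\<alpha>. dderiv \<alpha> f 0 = \<alpha>"
begin

text \<open>\<open>dB \<alpha> \<beta> x\<close> is the derivative of \<open>B \<beta>\<close> along \<open>\<alpha>\<close> at \<open>x\<close>, as prescribed by \<open>BC\<close>.\<close>
definition dB :: "quat \<Rightarrow> quat \<Rightarrow> quat \<Rightarrow> quat" where
  "dB \<alpha> \<beta> x = (1/2) *\<^sub>R (B \<alpha> x \<star> B \<beta> x) + (C x / 3) *\<^sub>R cnj_prods (dderiv \<alpha> f x) (dderiv \<beta> f x)"

lemma B_has_vector_derivative: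
  "x \<in> U \<Longrightarrow> ((\<lambda>t. B \<beta> (x + t *\<^sub>R \<alpha>)) has_vector_derivative dB \<alpha> \<beta> x) (at 0)"
  unfolding dB_def cnj_prods_def by (rule BC)

lemma f_has_vector_derivative:
  "x \<in> U \<Longrightarrow> ((\<lambda>t. dpow as f (x + t *\<^sub>R \<alpha>)) has_vector_derivative dpow (\<alpha> # as) f x) (at 0)"
  using dpow_has_vector_derivative_line[OF smooth open_domain, of x 0] by simp

lemma eventually_line_in_domain:
  assumes "x \<in> U"
  shows "\<forall>\<^sub>F t in nhds 0. x + t *\<^sub>R \<alpha> \<in> U"
proof -
  have "((\<lambda>t. x + t *\<^sub>R \<alpha>) \<longlongrightarrow> x + 0 *\<^sub>R \<alpha>) (at 0)"
    by (intro tendsto_intros)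
  then have "\<forall>\<^sub>F t in at 0. x + t *\<^sub>R \<alpha> \<in> U"
    using open_domain assms by (simp add: topological_tendstoD)
  then show ?thesis
    using assms by (simp add: eventually_nhds_conv_at)
qed

lemma dpow_diag2:
  assumes "x \<in> U"
  shows "dpow [\<alpha>, \<alpha>] f x = B \<alpha> x \<star> dderiv \<alpha> f x"
  using vector_derivative_unique_at[OF f_has_vector_derivative[OF assms, of "[\<alpha>]" \<alpha>, simplified]
      AB[OF assms]]
  by simp

lemma dpow3_formula:
  assumes "x \<in> U"
  shows "dpow [\<alpha>, \<beta>, \<beta>] f x = dB \<alpha> \<beta> x \<star> dderiv \<beta> f x + B \<beta> x \<star> dpow [\<alpha>, \<beta>] f x"
proof -
  have "\<forall>\<^sub>F t in nhds 0. t \<in> UNIV \<longrightarrow>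
      B \<beta> (x + t *\<^sub>R \<alpha>) \<star> dderiv \<beta> f (x + t *\<^sub>R \<alpha>) = dpow [\<beta>, \<beta>] f (x + t *\<^sub>R \<alpha>)"
    using eventually_line_in_domain[OF assms, of \<alpha>]
    by eventually_elim (simp only: dpow_diag2 simp_thms)
  then have "((\<lambda>t. B \<beta> (x + t *\<^sub>R \<alpha>) \<star> dderiv \<beta> f (x + t *\<^sub>R \<alpha>)) has_vector_derivative
      B \<beta> x \<star> dpow [\<alpha>, \<beta>] f x + dB \<alpha> \<beta> x \<star> dderiv \<beta> f x) (at 0) \<longleftrightarrow>
    ((\<lambda>t. dpow [\<beta>, \<beta>] f (x + t *\<^sub>R \<alpha>)) has_vector_derivative
      B \<beta> x \<star> dpow [\<alpha>, \<beta>] f x + dB \<alpha> \<beta> x \<star> dderiv \<beta> f x) (at 0)"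
    using dpow_diag2[OF assms] by (intro has_vector_derivative_cong_ev) simp_all
  moreover have "((\<lambda>t. B \<beta> (x + t *\<^sub>R \<alpha>) \<star> dderiv \<beta> f (x + t *\<^sub>R \<alpha>)) has_vector_derivative
      B \<beta> x \<star> dpow [\<alpha>, \<beta>] f x + dB \<alpha> \<beta> x \<star> dderiv \<beta> f x) (at 0)"
    using qmult.has_vector_derivative[OF B_has_vector_derivative[OF assms]
        f_has_vector_derivative[OF assms, of "[\<beta>]", simplified]] by simp
  ultimately have "((\<lambda>t. dpow [\<beta>, \<beta>] f (x + t *\<^sub>R \<alpha>)) has_vector_derivative
      B \<beta> x \<star> dpow [\<alpha>, \<beta>] f x + dB \<alpha> \<beta> x \<star> dderiv \<beta> f x) (at 0)"
    by blast
  then have "dpow [\<alpha>, \<beta>, \<beta>] f x = B \<beta> x \<star> dpow [\<alpha>, \<beta>] f x + dB \<alpha> \<beta> x \<star> dderiv \<beta> f x"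
    by (rule vector_derivative_unique_at[OF f_has_vector_derivative[OF assms]])
  then show ?thesis
    by (simp only: add.commute)
qed

lemma dB_at_0: "dB \<alpha> \<beta> 0 = (1/2) *\<^sub>R (B \<alpha> 0 \<star> B \<beta> 0) + (C 0 / 3) *\<^sub>R cnj_prods \<alpha> \<beta>"
  by (simp add: dB_def A0)

lemma B_zero_at_0: "B 0 0 = 0"
proof -
  have "((\<lambda>t. B 0 (0 + t *\<^sub>R 0)) has_vector_derivative 0) (at 0)"
    by simp
  then have "dB 0 0 0 = 0"
    using vector_derivative_unique_at[OF B_has_vector_derivative[OF zero_in_domain]] by blast
  then show ?thesis
    by (simp add: dB_at_0 cnj_prods.zero_left qmult_eq_0_iff)
qed

lemma linear_B_at_0: "linear (\<lambda>\<alpha>. B \<alpha> 0)"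
proof (cases "\<exists>\<beta>. B \<beta> 0 \<star> \<beta> \<noteq> 0")
  case True
  then obtain \<beta> where "B \<beta> 0 \<star> \<beta> \<noteq> 0"
    by blast
  moreover have "linear (\<lambda>\<alpha>. B \<alpha> 0 \<star> ((1/2) *\<^sub>R (B \<beta> 0 \<star> \<beta>)))"
  proof -
    text \<open>Solve the third-order formula at 0 for the only term that is not visibly linear
      in \<open>\<alpha>\<close>.\<close>
    have "B \<alpha> 0 \<star> ((1/2) *\<^sub>R (B \<beta> 0 \<star> \<beta>)) = dpow [\<alpha>, \<beta>, \<beta>] f 0
        - (C 0 / 3) *\<^sub>R (cnj_prods \<alpha> \<beta> \<star> \<beta>) - B \<beta> 0 \<star> dpow [\<alpha>, \<beta>] f 0" for \<alpha>
      using dpow3_formula[OF zero_in_domain, of \<alpha> \<beta>]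
      by (simp add: dB_at_0 A0 qmult.add_left qmult.scaleR_left qmult.scaleR_right qmult_assoc)
    moreover have "linear (\<lambda>\<alpha>. dpow [\<alpha>, \<beta>, \<beta>] f 0 - (C 0 / 3) *\<^sub>R (cnj_prods \<alpha> \<beta> \<star> \<beta>)
        - B \<beta> 0 \<star> dpow [\<alpha>, \<beta>] f 0)"
    proof -
      have "linear (\<lambda>\<alpha>. cnj_prods \<alpha> \<beta> \<star> \<beta>)"
        by (rule bounded_linear.linear[OF bounded_linear_compose[OF qmult.bounded_linear_left
              cnj_prods.bounded_linear_left]])
      moreover have "linear (\<lambda>\<alpha>. B \<beta> 0 \<star> dpow [\<alpha>, \<beta>] f 0)"
        using linear_compose[OF linear_dpow_Cons[OF smooth open_domain zero_in_domain, of "[\<beta>]"]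
            bounded_linear.linear[OF qmult.bounded_linear_right]] by (simp add: o_def)
      ultimately show ?thesis
        by (rule linear_compose_sub[OF linear_compose_sub[OF
              linear_dpow_Cons[OF smooth open_domain zero_in_domain] linear_compose_scale_right]])
    qed
    ultimately show ?thesis
      by simp
  qed
  ultimately show ?thesis
    using linear_cancel_qmult_right[of "(1/2) *\<^sub>R (B \<beta> 0 \<star> \<beta>)" "\<lambda>\<alpha>. B \<alpha> 0"] by simp
next
  case False
  then have "B \<alpha> 0 = 0" for \<alpha>
    using B_zero_at_0 by (cases "\<alpha> = 0") (auto simp: qmult_eq_0_iff)
  then show ?thesis
    by (simp add: linear_zero)
qed

lemma dpow2_at_0: "dpow [\<gamma>, \<alpha>] f 0 = (1/2) *\<^sub>R (B \<gamma> 0 \<star> \<alpha> + B \<alpha> 0 \<star> \<gamma>)"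
proof -
  define S where "S u v = dpow [u, v] f 0" for u v
  have add: "S (u + u') v = S u v + S u' v" for u u' v
    using linear_add[OF linear_dpow_Cons[OF smooth open_domain zero_in_domain, of "[v]"]]
    by (simp add: S_def)
  have swap: "S u v = S v u" for u v
    unfolding S_def by (rule dpow_swap[OF smooth open_domain zero_in_domain])
  have diag: "S u u = B u 0 \<star> u" for u
    using dpow_diag2[OF zero_in_domain, of u] by (simp add: S_def A0)
  have "S (\<gamma> + \<alpha>) (\<gamma> + \<alpha>) = S \<gamma> (\<gamma> + \<alpha>) + S \<alpha> (\<gamma> + \<alpha>)"
    by (rule add)
  also have "S \<gamma> (\<gamma> + \<alpha>) = S \<gamma> \<gamma> + S \<alpha> \<gamma>"
    using swap[of \<gamma> "\<gamma> + \<alpha>"] add by (rule trans)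
  also have "S \<alpha> (\<gamma> + \<alpha>) = S \<gamma> \<alpha> + S \<alpha> \<alpha>"
    using swap[of \<alpha> "\<gamma> + \<alpha>"] add by (rule trans)
  also have "S \<alpha> \<gamma> = S \<gamma> \<alpha>"
    by (rule swap)
  finally have "S (\<gamma> + \<alpha>) (\<gamma> + \<alpha>) = S \<gamma> \<gamma> + S \<alpha> \<alpha> + (S \<gamma> \<alpha> + S \<gamma> \<alpha>)"
    by (simp add: add_ac)
  moreover have "B (\<gamma> + \<alpha>) 0 = B \<gamma> 0 + B \<alpha> 0"
    by (rule linear_add[OF linear_B_at_0])
  ultimately have "S \<gamma> \<alpha> + S \<gamma> \<alpha> = B \<gamma> 0 \<star> \<alpha> + B \<alpha> 0 \<star> \<gamma>"
    unfolding diag by (simp add: qmult.add_left qmult.add_right add_ac)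
  then show ?thesis
    unfolding S_def by (metis scaleR_half_double)
qed

lemma dpow3_diag_at_0:
  "dpow [x, x, x] f 0 = ((3/2) *\<^sub>R (B x 0 \<star> B x 0) + qreal (C 0 * (norm x)\<^sup>2)) \<star> x"
proof -
  have "y + (1/2) *\<^sub>R y = (3/2) *\<^sub>R y" for y :: quat
    by (simp add: quat_eq_iff)
  then show ?thesis
    using dpow3_formula[OF zero_in_domain, of x x] dpow2_at_0[of x x]
    by (simp add: dB_at_0 A0 cnj_prods_self qmult.add_left qmult.scaleR_left qmult_assoc
        algebra_simps)
qed

lemmas f_has_vector_derivative_at_0 =
  f_has_vector_derivative[OF zero_in_domain, unfolded add_0_left]
lemmas B_has_vector_derivative_at_0 =
  B_has_vector_derivative[OF zero_in_domain, unfolded add_0_left]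

lemma C_differentiable_along_line: "(\<lambda>t. C (t *\<^sub>R \<gamma>)) differentiable (at 0)"
proof -
  define u where "u = qreal 1"
  define A where "A t = dderiv u f (t *\<^sub>R \<gamma>)" for t
  define R where "R t = dpow [u, u, u] f (t *\<^sub>R \<gamma>) - (1/2) *\<^sub>R ((B u (t *\<^sub>R \<gamma>) \<star> B u (t *\<^sub>R \<gamma>)) \<star> A t)
    - B u (t *\<^sub>R \<gamma>) \<star> dpow [u, u] f (t *\<^sub>R \<gamma>)" for t
  have A: "A differentiable (at 0)"
    using f_has_vector_derivative_at_0[of "[u]" \<gamma>] unfolding A_def[abs_def]
    by (auto intro: differentiableI_vector)
  have B: "(\<lambda>t. B u (t *\<^sub>R \<gamma>)) differentiable (at 0)"
    using B_has_vector_derivative_at_0 by (rule differentiableI_vector)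
  have "(\<lambda>t. dpow cs f (t *\<^sub>R \<gamma>)) differentiable (at 0)" for cs
    using f_has_vector_derivative_at_0 by (rule differentiableI_vector)
  with A B have R: "R differentiable (at 0)"
    unfolding R_def[abs_def]
    by (intro differentiable_diff differentiable_scaleR differentiable_qmult differentiable_const)
  have d: "(\<lambda>t. (A t \<bullet> A t) * A t $ 1) differentiable (at 0)"
    using A by (intro differentiable_mult differentiable_inner differentiable_vec_nth)
  have d0: "(A 0 \<bullet> A 0) * A 0 $ 1 \<noteq> 0"
    by (simp add: A_def A0 u_def inner_vec_def sum_4)
  have "\<forall>\<^sub>F t in nhds 0. C (t *\<^sub>R \<gamma>) * ((A t \<bullet> A t) * A t $ 1) = R t $ 1"
    using eventually_line_in_domain[OF zero_in_domain, of \<gamma>]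
  proof eventually_elim
    case (elim t)
    text \<open>The third-order formula in the real direction determines C as a quotient of
      differentiable functions.\<close>
    have "R t = (dB u u (t *\<^sub>R \<gamma>) - (1/2) *\<^sub>R (B u (t *\<^sub>R \<gamma>) \<star> B u (t *\<^sub>R \<gamma>))) \<star> A t"
      using dpow3_formula[of "t *\<^sub>R \<gamma>" u u] elim unfolding R_def A_def
      by (simp add: qmult.diff_left qmult.scaleR_left)
    also have "dB u u (t *\<^sub>R \<gamma>) - (1/2) *\<^sub>R (B u (t *\<^sub>R \<gamma>) \<star> B u (t *\<^sub>R \<gamma>))
        = qreal (C (t *\<^sub>R \<gamma>) * (norm (A t))\<^sup>2)"
      by (simp add: dB_def A_def cnj_prods_self scaleR_qreal)
    finally have "R t = (C (t *\<^sub>R \<gamma>) * (norm (A t))\<^sup>2) *\<^sub>R A t"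
      by simp
    then show ?case
      by (simp add: power2_norm_eq_inner mult.assoc)
  qed
  then show ?thesis
    by (rule differentiable_factor[OF d differentiable_vec_nth[OF R] d0])
qed

lemma C_has_derivative_along_line:
  "((\<lambda>t. C (t *\<^sub>R \<gamma>)) has_real_derivative deriv (\<lambda>t. C (t *\<^sub>R \<gamma>)) 0) (at 0)"
  using C_differentiable_along_line DERIV_deriv_iff_real_differentiable by blast

lemma dB_has_vector_derivative_at_0:
  assumes "((\<lambda>t. C (t *\<^sub>R \<gamma>)) has_real_derivative k) (at 0)"
  shows "((\<lambda>t. dB \<alpha> \<beta> (t *\<^sub>R \<gamma>)) has_vector_derivative
    (1/2) *\<^sub>R (dB \<gamma> \<alpha> 0 \<star> B \<beta> 0 + B \<alpha> 0 \<star> dB \<gamma> \<beta> 0) + (k / 3) *\<^sub>R cnj_prods \<alpha> \<beta>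
    + (C 0 / 3) *\<^sub>R (cnj_prods (dpow [\<gamma>, \<alpha>] f 0) \<beta> + cnj_prods \<alpha> (dpow [\<gamma>, \<beta>] f 0))) (at 0)"
proof -
  have B: "((\<lambda>t. B \<beta> (t *\<^sub>R \<gamma>)) has_vector_derivative dB \<gamma> \<beta> 0) (at 0)" for \<beta>
    by (rule B_has_vector_derivative_at_0)
  have A: "((\<lambda>t. dderiv \<alpha> f (t *\<^sub>R \<gamma>)) has_vector_derivative dpow [\<gamma>, \<alpha>] f 0) (at 0)" for \<alpha>
    using f_has_vector_derivative_at_0[of "[\<alpha>]" \<gamma>] by simp
  show ?thesis
    unfolding dB_def[of \<alpha> \<beta>]
    by (rule has_vector_derivative_eq_rhs[OF has_vector_derivative_add[OF
          has_vector_derivative_scaleR[OF DERIV_const qmult.has_vector_derivative[OF B B]]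
          has_vector_derivative_scaleR[OF DERIV_cdivide[OF assms]
            cnj_prods.has_vector_derivative[OF A A]]]])
      (simp add: A0 algebra_simps)
qed

lemma dpow4_formula_at_0:
  assumes k: "((\<lambda>t. C (t *\<^sub>R \<gamma>)) has_real_derivative k) (at 0)"
  shows "dpow [\<gamma>, \<alpha>, \<beta>, \<beta>] f 0
    = ((1/2) *\<^sub>R (dB \<gamma> \<alpha> 0 \<star> B \<beta> 0 + B \<alpha> 0 \<star> dB \<gamma> \<beta> 0) + (k / 3) *\<^sub>R cnj_prods \<alpha> \<beta>
       + (C 0 / 3) *\<^sub>R (cnj_prods (dpow [\<gamma>, \<alpha>] f 0) \<beta> + cnj_prods \<alpha> (dpow [\<gamma>, \<beta>] f 0))) \<star> \<beta>
      + dB \<alpha> \<beta> 0 \<star> dpow [\<gamma>, \<beta>] f 0 + dB \<gamma> \<beta> 0 \<star> dpow [\<alpha>, \<beta>] f 0 + B \<beta> 0 \<star> dpow [\<gamma>, \<alpha>, \<beta>] f 0"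
proof -
  let ?D = "(1/2) *\<^sub>R (dB \<gamma> \<alpha> 0 \<star> B \<beta> 0 + B \<alpha> 0 \<star> dB \<gamma> \<beta> 0) + (k / 3) *\<^sub>R cnj_prods \<alpha> \<beta>
    + (C 0 / 3) *\<^sub>R (cnj_prods (dpow [\<gamma>, \<alpha>] f 0) \<beta> + cnj_prods \<alpha> (dpow [\<gamma>, \<beta>] f 0))"
  let ?g = "\<lambda>t. dB \<alpha> \<beta> (t *\<^sub>R \<gamma>) \<star> dderiv \<beta> f (t *\<^sub>R \<gamma>) + B \<beta> (t *\<^sub>R \<gamma>) \<star> dpow [\<alpha>, \<beta>] f (t *\<^sub>R \<gamma>)"
  have ev: "\<forall>\<^sub>F t in nhds 0. ?g t = dpow [\<alpha>, \<beta>, \<beta>] f (t *\<^sub>R \<gamma>)"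
    using eventually_line_in_domain[OF zero_in_domain, of \<gamma>]
    by eventually_elim (simp only: add_0_left dpow3_formula)
  have A: "((\<lambda>t. dderiv \<beta> f (t *\<^sub>R \<gamma>)) has_vector_derivative dpow [\<gamma>, \<beta>] f 0) (at 0)"
    using f_has_vector_derivative_at_0[of "[\<beta>]" \<gamma>] by simp
  have "(?g has_vector_derivative
      dB \<alpha> \<beta> 0 \<star> dpow [\<gamma>, \<beta>] f 0 + ?D \<star> \<beta>
      + (B \<beta> 0 \<star> dpow [\<gamma>, \<alpha>, \<beta>] f 0 + dB \<gamma> \<beta> 0 \<star> dpow [\<alpha>, \<beta>] f 0)) (at 0)"
    using has_vector_derivative_add[OF
        qmult.has_vector_derivative[OF dB_has_vector_derivative_at_0[OF k] A]
        qmult.has_vector_derivative[OF B_has_vector_derivative_at_0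
          f_has_vector_derivative_at_0[of "[\<alpha>, \<beta>]" \<gamma>]]]
    by (simp add: A0)
  moreover have "(?g has_vector_derivative D) (at 0) \<longleftrightarrow>
      ((\<lambda>t. dpow [\<alpha>, \<beta>, \<beta>] f (t *\<^sub>R \<gamma>)) has_vector_derivative D) (at 0)" for D
    using ev eventually_nhds_x_imp_x[OF ev]
    by (intro has_vector_derivative_cong_ev) (auto elim: eventually_mono)
  ultimately have "dpow [\<gamma>, \<alpha>, \<beta>, \<beta>] f 0
      = dB \<alpha> \<beta> 0 \<star> dpow [\<gamma>, \<beta>] f 0 + ?D \<star> \<beta>
        + (B \<beta> 0 \<star> dpow [\<gamma>, \<alpha>, \<beta>] f 0 + dB \<gamma> \<beta> 0 \<star> dpow [\<alpha>, \<beta>] f 0)"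
    using vector_derivative_unique_at[OF f_has_vector_derivative_at_0[of "[\<alpha>, \<beta>, \<beta>]" \<gamma>]] by blast
  then show ?thesis
    by (simp only: add_ac)
qed

lemma imaginary_part_B_at_0:
  fixes e :: quat
  defines v_def: "v \<equiv> B (qreal 1) 0 - qreal (B (qreal 1) 0 $ 1)"
    and k_def: "k \<equiv> deriv (\<lambda>t. C (t *\<^sub>R qreal 1)) 0"
  assumes imaginary: "qcnj e = - e"
  shows "C 0 *\<^sub>R (B e 0 - qreal (B e 0 $ 1)) = C 0 *\<^sub>R (e \<star> v - qreal ((e \<star> v) $ 1)) - (k / 2) *\<^sub>R e"
proof -
  have "e $ 1 = 0"
    using arg_cong[OF imaginary, of "\<lambda>x. x $ 1"] by simp
  define u where "u = qreal 1"
  have "dpow [u, e] (dpow [u, u] f) 0 = dpow [e, u] (dpow [u, u] f) 0"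
    by (rule dpow_swap[OF smooth_on_dpow[OF smooth] open_domain zero_in_domain])
  moreover have "dpow [u, e] (dpow [u] f) 0 = dpow [e, u] (dpow [u] f) 0"
    by (rule dpow_swap[OF smooth_on_dpow[OF smooth] open_domain zero_in_domain])
  text \<open>The two mixed fourth derivatives agree; after cancelling their common third-order
    term the resulting identity is linear in \<open>B e 0\<close>.\<close>
  moreover note
    dpow4_formula_at_0[OF C_has_derivative_along_line[of "qreal 1"], where \<alpha> = e and \<beta> = "qreal 1",
      unfolded dB_at_0 dpow2_at_0, folded u_def k_def]
    dpow4_formula_at_0[OF C_has_derivative_along_line[of e], where \<alpha> = "qreal 1" and \<beta> = "qreal 1",
      unfolded dB_at_0 dpow2_at_0, folded u_def]
  ultimately show ?thesis
    using \<open>e $ 1 = 0\<close> unfolding quat_eq_iff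
    by (simp add: cnj_prods_def u_def v_def algebra_simps)
qed

lemma B_at_0_affine:
  assumes "C 0 \<noteq> 0"
  shows "\<exists>(p :: quat \<Rightarrow> real) q. linear p \<and> (\<forall>\<alpha>. B \<alpha> 0 = qreal (p \<alpha>) + \<alpha> \<star> q)"
proof -
  define v where "v = B (qreal 1) 0 - qreal (B (qreal 1) 0 $ 1)"
  define k where "k = deriv (\<lambda>t. C (t *\<^sub>R qreal 1)) 0"
  define q where "q = v - qreal (k / (2 * C 0))"
  define p where "p \<alpha> = (B \<alpha> 0 - \<alpha> \<star> q) $ 1" for \<alpha>
  have "linear (\<lambda>\<alpha>. B \<alpha> 0 - \<alpha> \<star> q)"
    by (rule linear_compose_sub[OF linear_B_at_0
          bounded_linear.linear[OF qmult.bounded_linear_left]])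
  then have "linear p"
    unfolding p_def using linear_compose[OF _ bounded_linear.linear[OF bounded_linear_vec_nth]]
    by (simp only: o_def)
  moreover have "B \<alpha> 0 = qreal (p \<alpha>) + \<alpha> \<star> q" for \<alpha>
  proof -
    define e where "e = \<alpha> - qreal (\<alpha> $ 1)"
    have "qcnj e = - e"
      by (simp add: e_def quat_eq_iff)
    have "B \<alpha> 0 = B ((\<alpha> $ 1) *\<^sub>R qreal 1 + e) 0"
      by (rule arg_cong[where f = "\<lambda>x. B x 0"]) (simp add: e_def quat_eq_iff)
    also have "\<dots> = (\<alpha> $ 1) *\<^sub>R B (qreal 1) 0 + B e 0"
      by (simp add: linear_add[OF linear_B_at_0] linear_scale[OF linear_B_at_0])
    finally show ?thesis
      using imaginary_part_B_at_0[OF \<open>qcnj e = - e\<close>] \<open>C 0 \<noteq> 0\<close>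
      unfolding quat_eq_iff v_def[symmetric] k_def[symmetric]
      by (simp add: p_def q_def v_def e_def field_simps)
  qed
  ultimately show ?thesis
    by blast
qed

end

theorem mainTheorem8:
  fixes U :: "quat set" and f :: "quat \<Rightarrow> quat"
    and B :: "quat \<Rightarrow> quat \<Rightarrow> quat" and C :: "quat \<Rightarrow> real"
  assumes diffeo: "smooth_diffeo U f"
    and arcs: "segments_to_arcs U f"
    and AB: "\<And>\<alpha> x. x \<in> U \<Longrightarrow>
       ((\<lambda>t. dderiv \<alpha> f (x + t *\<^sub>R \<alpha>)) has_vector_derivative (B \<alpha> x \<star> dderiv \<alpha> f x)) (at 0)"
    and BC: "\<And>\<alpha> \<beta> x. x \<in> U \<Longrightarrow>
       ((\<lambda>t. B \<beta> (x + t *\<^sub>R \<alpha>)) has_vector_derivative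
          ((1/2) *\<^sub>R (B \<alpha> x \<star> B \<beta> x)
           + (C x / 3) *\<^sub>R (qcnj (dderiv \<alpha> f x) \<star> dderiv \<beta> f x
                            + qcnj (dderiv \<beta> f x) \<star> dderiv \<alpha> f x
                            + dderiv \<alpha> f x \<star> qcnj (dderiv \<beta> f x)))) (at 0)"
    and U0: "0 \<in> U"
    and A0: "\<And>\<alpha>. dderiv \<alpha> f 0 = \<alpha>"
    and C0: "C 0 \<noteq> 0"
  shows "\<exists>(p :: quat \<Rightarrow> real) q. linear p \<and> (\<forall>\<alpha>. B \<alpha> 0 = qreal (p \<alpha>) + \<alpha> \<star> q) \<and>
     (f 0 = 0 \<longrightarrow>
       ((\<lambda>x. (f x - (x + (1/2) *\<^sub>R ((qreal (p x) + x \<star> q) \<star> x)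
                  + (1/6) *\<^sub>R (((3/2) *\<^sub>R ((qreal (p x) + x \<star> q) \<star> (qreal (p x) + x \<star> q))
                                + qreal (C 0 * (norm x)\<^sup>2)) \<star> x)))
              /\<^sub>R (norm x ^ 3)) \<longlongrightarrow> 0) (at 0))"
proof -
  text \<open>The arc property only serves to derive the structure equations, which are hypotheses here.\<close>
  interpret structure_equations U f B C
    by unfold_locales (use diffeo AB BC U0 A0 in \<open>auto simp: smooth_diffeo_def\<close>)
  obtain p q where "linear p" and B0: "\<And>\<alpha>. B \<alpha> 0 = qreal (p \<alpha>) + \<alpha> \<star> q"
    using B_at_0_affine[OF C0] by blast
  have "((\<lambda>x. (f x - (x + (1/2) *\<^sub>R ((qreal (p x) + x \<star> q) \<star> x)
                  + (1/6) *\<^sub>R (((3/2) *\<^sub>R ((qreal (p x) + x \<star> q) \<star> (qreal (p x) + x \<star> q))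
                                + qreal (C 0 * (norm x)\<^sup>2)) \<star> x)))
              /\<^sub>R (norm x ^ 3)) \<longlongrightarrow> 0) (at 0)" if "f 0 = 0"
  proof -
    have "f 0 + dpow [x] f 0 + (1/2) *\<^sub>R dpow [x, x] f 0 + (1/6) *\<^sub>R dpow [x, x, x] f 0
        = x + (1/2) *\<^sub>R ((qreal (p x) + x \<star> q) \<star> x)
          + (1/6) *\<^sub>R (((3/2) *\<^sub>R ((qreal (p x) + x \<star> q) \<star> (qreal (p x) + x \<star> q))
                        + qreal (C 0 * (norm x)\<^sup>2)) \<star> x)" for x
      unfolding dpow3_diag_at_0 dpow_diag2[OF zero_in_domain] B0 \<open>f 0 = 0\<close> by (simp add: A0)
    then show ?thesis
      using dpow_taylor3[OF smooth open_domain zero_in_domain] by (simp only: add_0_left)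
  qed
  with \<open>linear p\<close> B0 show ?thesis
    by blast
qed

end
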